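(* Assume that $f_a(0)=-\infty$ for every $a\in A$. Let $\theta\in\mathbb R^n$ and let $p^*\in\mathcal M_1^+(A)$ with $I(p^* )-\sum_j\theta_j\langle p^*,H_j\rangle$ finite. Then $p^*$ satisfies the variational principle with parameters $\theta$ if and only if there exists $\alpha\in\mathbb R$ such that $p^*_a>0$ and $$f_a(p^*_a)=-\alpha-\sum_{j=1}^n\theta_jH_j(a)\qquad\text{for all }a\in A.$$
   Context: Let $A$ be a finite or countable set and $\mathcal M_1^+(A)$ the set of probability distributions $p=(p_a)_{a\in A}$ on $A$. For each $a\in A$ let $h_a:[0,1]\to\mathbb R$ be continuous and strictly concave with $h_a(0)=h_a(1)=0$, differentiable on $(0,1)$ with $h_a'(u)=-f_a(u)$, where $f_a$ extends to a continuous (necessarily strictly increasing) function on $(0,1]$; put $f_a(0)=\lim_{u\downarrow0}f_a(u)\in[-\infty,\infty)$. The generalised entropy is $I(p)=\sum_{a\in A}h_a(p_a)\in[0,+\infty]$. Let $H_1,\dots,H_n:A\to\mathbb R$ be functions bounded from below, and write $\langle p,X\rangle=\sum_{a}p_aX(a)$. A distribution $p^*\in\mathcal M_1^+(A)$ satisfies the variational principle with parameters $\theta=(\theta_1,\dots,\theta_n)\in\mathbb R^n$ if $+\infty> I(p^* )-\sum_{j=1}^n\theta_j\langle p^*,H_j\rangle\ \ge\ I(p)-\sum_{j=1}^n\theta_j\langle p,H_j\rangle$ for all $p\in\mathcal M_1^+(A)$. *)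

theory Defs
  imports "HOL-Analysis.Analysis" "HOL-Library.Extended_Real"
begin

definition strictly_concave_on :: "real set \<Rightarrow> (real \<Rightarrow> real) \<Rightarrow> bool" where
  "strictly_concave_on S g \<longleftrightarrow> convex S \<and>
     (\<forall>x\<in>S. \<forall>y\<in>S. x \<noteq> y \<longrightarrow> (\<forall>t. 0 < t \<and> t < 1 \<longrightarrow>
        g ((1 - t) * x + t * y) > (1 - t) * g x + t * g y))"

definition prob_dists :: "'a set \<Rightarrow> ('a \<Rightarrow> real) set" where
  "prob_dists A = {p. (\<forall>a\<in>A. 0 \<le> p a) \<and> (p has_sum 1) A}"

text \<open>Generalised entropy I(p) = sum of h_a(p_a), a value in [0,+infinity].
  (All summands are nonnegative, since h_a is concave on [0,1] and vanishes at 0 and 1.)\<close>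
definition gen_entropy :: "'a set \<Rightarrow> ('a \<Rightarrow> real \<Rightarrow> real) \<Rightarrow> ('a \<Rightarrow> real) \<Rightarrow> ereal" where
  "gen_entropy A h p = enn2ereal (\<Sum>\<^sub>\<infinity>a\<in>A. ennreal (h a (p a)))"

text \<open>The pairing <p,X> = sum of p_a X(a), as an extended real (positive part minus
  negative part); for X bounded below it lies in (-infinity, +infinity].\<close>
definition pair :: "'a set \<Rightarrow> ('a \<Rightarrow> real) \<Rightarrow> ('a \<Rightarrow> real) \<Rightarrow> ereal" where
  "pair A p X = enn2ereal (\<Sum>\<^sub>\<infinity>a\<in>A. ennreal (p a * max (X a) 0))
              - enn2ereal (\<Sum>\<^sub>\<infinity>a\<in>A. ennreal (p a * max (- X a) 0))"

definition vp_terms :: "'a set \<Rightarrow> ('a \<Rightarrow> real \<Rightarrow> real) \<Rightarrow> nat \<Rightarrow> (nat \<Rightarrow> 'a \<Rightarrow> real)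
    \<Rightarrow> (nat \<Rightarrow> real) \<Rightarrow> ('a \<Rightarrow> real) \<Rightarrow> ereal set" where
  "vp_terms A h n H \<theta> p =
     insert (gen_entropy A h p) ((\<lambda>j. - (ereal (\<theta> j) * pair A p (H j))) ` {1..n})"

text \<open>The expression I(p) - sum_j theta_j <p,H_j> is well defined unless it involves
  both +infinity and -infinity.\<close>
definition vp_defined :: "'a set \<Rightarrow> ('a \<Rightarrow> real \<Rightarrow> real) \<Rightarrow> nat \<Rightarrow> (nat \<Rightarrow> 'a \<Rightarrow> real)
    \<Rightarrow> (nat \<Rightarrow> real) \<Rightarrow> ('a \<Rightarrow> real) \<Rightarrow> bool" where
  "vp_defined A h n H \<theta> p \<longleftrightarrow>
     \<not> (\<infinity> \<in> vp_terms A h n H \<theta> p \<and> - \<infinity> \<in> vp_terms A h n H \<theta> p)"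

definition vp_obj :: "'a set \<Rightarrow> ('a \<Rightarrow> real \<Rightarrow> real) \<Rightarrow> nat \<Rightarrow> (nat \<Rightarrow> 'a \<Rightarrow> real)
    \<Rightarrow> (nat \<Rightarrow> real) \<Rightarrow> ('a \<Rightarrow> real) \<Rightarrow> ereal" where
  "vp_obj A h n H \<theta> p = gen_entropy A h p - (\<Sum>j\<in>{1..n}. ereal (\<theta> j) * pair A p (H j))"

definition variational_principle :: "'a set \<Rightarrow> ('a \<Rightarrow> real \<Rightarrow> real) \<Rightarrow> nat
    \<Rightarrow> (nat \<Rightarrow> 'a \<Rightarrow> real) \<Rightarrow> (nat \<Rightarrow> real) \<Rightarrow> ('a \<Rightarrow> real) \<Rightarrow> bool" where
  "variational_principle A h n H \<theta> ps \<longleftrightarrow>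
     ps \<in> prob_dists A \<and> vp_defined A h n H \<theta> ps \<and> vp_obj A h n H \<theta> ps < \<infinity> \<and>
     (\<forall>p\<in>prob_dists A. vp_defined A h n H \<theta> p \<longrightarrow> vp_obj A h n H \<theta> p \<le> vp_obj A h n H \<theta> ps)"

end

theory Submission
  imports Defs
begin

text \<open>
  Put K(a) = sum_j theta_j H_j(a) and
  G_a(u) = h_a(u) - u K(a).  Whenever all summands of the objective
  I(p) - sum_j theta_j <p,H_j> are finite ("p is regular"), the objective equals the
  real sum of G_a(p_a) over A (regular_objective), and a distribution with finite
  objective is automatically regular (regular_if_finite).

  Sufficiency (gibbs_imp_vp): if f_a(p*_a) = -alpha - K(a), the tangent inequality for
  the concave h_a at p*_a gives G_a(u) - alpha u <= G_a(p*_a) - alpha p*_a for all u in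
  [0,1].  Summing over A settles regular competitors; every other well-defined
  competitor either has objective minus infinity or is shown regular by domination.

  Necessity (vp_imp_gibbs): comparing p* with the distributions obtained by moving mass
  t from b to a shows that t |-> G_a(p*_a + t) + G_b(p*_b - t) is maximal at t = 0.
  Since f_a tends to minus infinity at 0, h_a has infinite slope at 0, which forces
  p*_a > 0 (vp_pos); then Fermat's rule equates f_a(p*_a) + K(a) over all a.
\<close>

subsection \<open>Infinite sums\<close>

lemma enn2ereal_infsum_of_summable:
  fixes g :: "'a \<Rightarrow> real"
  assumes "g summable_on A" and "\<And>x. x \<in> A \<Longrightarrow> 0 \<le> g x"
  shows "enn2ereal (\<Sum>\<^sub>\<infinity>x\<in>A. ennreal (g x)) = ereal (\<Sum>\<^sub>\<infinity>x\<in>A. g x)"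
proof -
  have "\<And>F. finite F \<Longrightarrow> F \<subseteq> A \<Longrightarrow> sum (ennreal \<circ> g) F = ennreal (sum g F)"
    by (metis (mono_tags, lifting) comp_def assms(2) subsetD sum.cong sum_ennreal)
  then have "infsum (ennreal \<circ> g) A = ennreal (infsum g A)"
    by (simp add: infsum_comm_additive_general assms(1))
  then have sum_eq: "(\<Sum>\<^sub>\<infinity>x\<in>A. ennreal (g x)) = ennreal (infsum g A)"
    by (simp only: comp_def)
  have "0 \<le> infsum g A" using assms(2) by (rule infsum_nonneg)
  then show ?thesis unfolding sum_eq by (rule enn2ereal_ennreal)
qed

lemma ennreal_infsum_of_not_summable:
  fixes g :: "'a \<Rightarrow> real"
  assumes "\<not> g summable_on A" and "\<And>x. x \<in> A \<Longrightarrow> 0 \<le> g x"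
  shows "(\<Sum>\<^sub>\<infinity>x\<in>A. ennreal (g x)) = \<infinity>"
proof (rule ccontr)
  let ?S = "\<Sum>\<^sub>\<infinity>x\<in>A. ennreal (g x)"
  assume "?S \<noteq> \<infinity>"
  have "sum g F \<le> enn2real ?S" if "finite F" "F \<subseteq> A" for F
  proof -
    have "ennreal (sum g F) = (\<Sum>x\<in>F. ennreal (g x))"
      using that assms(2) by (subst sum_ennreal) auto
    also have "\<dots> = (\<Sum>\<^sub>\<infinity>x\<in>F. ennreal (g x))"
      using that(1) by simp
    also have "\<dots> \<le> ?S"
      using that by (intro infsum_mono_neutral) (auto intro: nonneg_summable_on_complete)
    finally have "enn2real (ennreal (sum g F)) \<le> enn2real ?S"
      using \<open>?S \<noteq> \<infinity>\<close> by (intro enn2real_mono) (auto simp: top.not_eq_extremum)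
    moreover have "0 \<le> sum g F"
      using that assms(2) by (auto intro: sum_nonneg)
    ultimately show ?thesis by simp
  qed
  then have "bdd_above (sum g ` {F. F \<subseteq> A \<and> finite F})"
    by (auto intro!: bdd_aboveI)
  then have "g summable_on A"
    by (intro nonneg_bdd_above_summable_on assms(2))
  with assms(1) show False by simp
qed

lemma has_sum_diff:
  fixes f g :: "'a \<Rightarrow> 'b::topological_ab_group_add"
  assumes "(f has_sum a) A" and "(g has_sum b) A"
  shows "((\<lambda>x. f x - g x) has_sum (a - b)) A"
  using has_sum_add[OF assms(1) has_sum_uminus[of g A "- b", THEN iffD2]] assms(2)
  by simp

lemma summable_on_diff:
  fixes f g :: "'a \<Rightarrow> 'b::{topological_ab_group_add, t2_space}"
  assumes "f summable_on A" and "g summable_on A"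
  shows "(\<lambda>x. f x - g x) summable_on A"
proof -
  obtain a b where "(f has_sum a) A" "(g has_sum b) A"
    using assms by (auto simp: summable_on_def)
  from has_sum_diff[OF this] show ?thesis by (auto simp: summable_on_def)
qed

lemma has_sum_finite_sum:
  fixes f :: "'i \<Rightarrow> 'a \<Rightarrow> 'b::topological_comm_monoid_add"
  assumes "finite I" and "\<And>i. i \<in> I \<Longrightarrow> (f i has_sum s i) A"
  shows "((\<lambda>x. \<Sum>i\<in>I. f i x) has_sum (\<Sum>i\<in>I. s i)) A"
  using assms by (induction I rule: finite_induct) (auto intro: has_sum_add)

lemma summable_on_finite_sum:
  fixes f :: "'i \<Rightarrow> 'a \<Rightarrow> 'b::{topological_comm_monoid_add, t2_space}"
  assumes "finite I" and "\<And>i. i \<in> I \<Longrightarrow> f i summable_on A"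
  shows "(\<lambda>x. \<Sum>i\<in>I. f i x) summable_on A"
proof -
  have "((\<lambda>x. \<Sum>i\<in>I. f i x) has_sum (\<Sum>i\<in>I. infsum (f i) A)) A"
    by (rule has_sum_finite_sum[OF assms(1)]) (use assms(2) in auto)
  then show ?thesis by (auto simp: summable_on_def)
qed

lemma has_sum_change_finite:
  fixes f g :: "'a \<Rightarrow> 'b::topological_ab_group_add"
  assumes "(f has_sum s) A" and "finite F" and "F \<subseteq> A"
    and "\<And>x. x \<in> A - F \<Longrightarrow> g x = f x"
  shows "(g has_sum (s + (\<Sum>x\<in>F. g x - f x))) A"
proof -
  have "((\<lambda>x. g x - f x) has_sum (\<Sum>x\<in>F. g x - f x)) F"
    using assms(2) by (rule has_sum_finiteI) simp
  then have "((\<lambda>x. g x - f x) has_sum (\<Sum>x\<in>F. g x - f x)) A"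
    by (rule has_sum_cong_neutral[THEN iffD1, rotated -1]) (use assms(3,4) in auto)
  from has_sum_add[OF assms(1) this] show ?thesis by simp
qed

lemma summable_on_change_finite:
  fixes f g :: "'a \<Rightarrow> 'b::topological_ab_group_add"
  assumes "f summable_on A" and "finite F" and "F \<subseteq> A"
    and "\<And>x. x \<in> A - F \<Longrightarrow> g x = f x"
  shows "g summable_on A"
proof -
  obtain s where "(f has_sum s) A" using assms(1) by (auto simp: summable_on_def)
  from has_sum_change_finite[OF this assms(2-4)] show ?thesis by (auto simp: summable_on_def)
qed

lemma summable_on_nonneg_sum_bound:
  fixes g\<^sub>0 U :: "'a \<Rightarrow> real" and g :: "'i \<Rightarrow> 'a \<Rightarrow> real"
  assumes "finite I" and "U summable_on A"
    and bound: "\<And>x. x \<in> A \<Longrightarrow> g\<^sub>0 x + (\<Sum>i\<in>I. g i x) \<le> U x"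
    and nonneg\<^sub>0: "\<And>x. x \<in> A \<Longrightarrow> 0 \<le> g\<^sub>0 x"
    and nonneg: "\<And>i x. i \<in> I \<Longrightarrow> x \<in> A \<Longrightarrow> 0 \<le> g i x"
  shows "g\<^sub>0 summable_on A" and "\<And>i. i \<in> I \<Longrightarrow> g i summable_on A"
proof -
  have sum_nonneg: "0 \<le> (\<Sum>i\<in>I. g i x)" if "x \<in> A" for x
    using nonneg that by (intro sum_nonneg) auto
  have "g\<^sub>0 x \<le> U x" if "x \<in> A" for x
    using bound[OF that] sum_nonneg[OF that] by linarith
  then show "g\<^sub>0 summable_on A"
    by (rule summable_on_comparison_test[OF assms(2)]) (use nonneg\<^sub>0 in auto)
  fix i assume i: "i \<in> I"
  have "g i x \<le> U x" if "x \<in> A" for x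
  proof -
    have "g i x \<le> (\<Sum>i\<in>I. g i x)"
      using assms(1) i nonneg that by (intro member_le_sum) auto
    then show ?thesis using bound[OF that] nonneg\<^sub>0[OF that] by linarith
  qed
  then show "g i summable_on A"
    by (rule summable_on_comparison_test[OF assms(2)]) (use nonneg i in auto)
qed

lemma sum_ereal_MInfty:
  fixes g :: "'i \<Rightarrow> ereal"
  assumes "finite I" and "\<And>i. i \<in> I \<Longrightarrow> g i \<noteq> \<infinity>" and "i\<^sub>0 \<in> I" and "g i\<^sub>0 = -\<infinity>"
  shows "(\<Sum>i\<in>I. g i) = -\<infinity>"
  using assms
proof (induction I rule: finite_induct)
  case (insert i I)
  show ?case
  proof (cases "i = i\<^sub>0")
    case True
    have "(\<Sum>i\<in>I. g i) \<noteq> \<infinity>"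
      using insert by (subst sum_Pinfty) auto
    then show ?thesis using insert True by simp
  next
    case False
    then have "(\<Sum>i\<in>I. g i) = -\<infinity>" using insert by auto
    then show ?thesis using insert by simp
  qed
qed simp

subsection \<open>Concave functions on the unit interval\<close>

lemma strictly_concave_on_le:
  assumes "strictly_concave_on S g" and "x \<in> S" "y \<in> S" and "0 \<le> t" "t \<le> 1"
  shows "(1 - t) * g x + t * g y \<le> g ((1 - t) * x + t * y)"
proof (cases "x = y \<or> t = 0 \<or> t = 1")
  case True
  then show ?thesis by (auto simp: algebra_simps)
next
  case False
  then have "0 < t" "t < 1" using assms(4,5) by auto
  then have "(1 - t) * g x + t * g y < g ((1 - t) * x + t * y)"
    using assms(1-3) False unfolding strictly_concave_on_def by blast
  then show ?thesis by simp
qed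

lemma strictly_concave_on_tangent:
  assumes "strictly_concave_on S g" and "x \<in> interior S" "u \<in> S"
    and "(g has_real_derivative d) (at x)"
  shows "g u \<le> g x + d * (u - x)"
proof -
  have "convex S" using assms(1) by (simp add: strictly_concave_on_def)
  have convex: "convex_on S (\<lambda>u. - g u)"
  proof (rule convex_onI)
    fix t y z :: real assume "0 < t" "t < 1" "y \<in> S" "z \<in> S"
    then show "- g ((1 - t) *\<^sub>R y + t *\<^sub>R z) \<le> (1 - t) * - g y + t * - g z"
      using strictly_concave_on_le[OF assms(1), of y z t] by simp
  qed fact
  have "((\<lambda>u. - g u) has_field_derivative - d) (at x within S)"
    using DERIV_minus[OF assms(4)] by (rule has_field_derivative_at_within)
  from convex_on_imp_above_tangent[OF convex convex_connected[OF \<open>convex S\<close>] assms(2,3) this]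
  show ?thesis by simp
qed

lemma concave_nonneg_between_zeros:
  assumes "strictly_concave_on {0..1} g" and "g 0 = 0" "g 1 = 0" and "0 \<le> u" "u \<le> 1"
  shows "0 \<le> g u"
  using strictly_concave_on_le[OF assms(1), of 0 1 u] assms by simp

lemma concave_chord_from_zero:
  assumes "strictly_concave_on {0..1} g" and "g 0 = 0" and "s \<in> {0..1}" and "0 \<le> \<tau>" "\<tau> \<le> 1"
  shows "\<tau> * g s \<le> g (\<tau> * s)"
  using strictly_concave_on_le[OF assms(1), of 0 s \<tau>] assms by simp

text \<open>If g(0) = 0 and the derivative -f of g tends to infinity at 0+, then g grows faster
  than every linear function near 0.  This is where the assumption that f tends to
  minus infinity at 0 enters.\<close>

lemma infinite_slope_at_zero:
  fixes g f :: "real \<Rightarrow> real"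
  assumes "continuous_on {0..1} g" and "g 0 = 0"
    and deriv: "\<And>u. 0 < u \<Longrightarrow> u < 1 \<Longrightarrow> (g has_real_derivative - f u) (at u)"
    and "filterlim f at_bot (at_right 0)"
  shows "\<exists>\<delta>>0. \<forall>t. 0 < t \<and> t < \<delta> \<longrightarrow> M * t \<le> g t"
proof -
  have "\<forall>\<^sub>F u in at_right 0. f u \<le> - M"
    using assms(4) by (simp add: filterlim_at_bot)
  then obtain \<delta> :: real where "\<delta> > 0" and f_le: "\<And>u. 0 < u \<Longrightarrow> u < \<delta> \<Longrightarrow> f u \<le> - M"
    unfolding eventually_at_right_field by auto
  have "M * t \<le> g t" if t: "0 < t" "t < min \<delta> 1" for t
  proof -
    have "continuous_on {0..t} g"
      by (rule continuous_on_subset[OF assms(1)]) (use t in auto)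
    moreover have "\<And>u. 0 < u \<Longrightarrow> u < t \<Longrightarrow> g differentiable (at u)"
      using deriv t unfolding real_differentiable_def by force
    ultimately obtain l z where z: "0 < z" "z < t" "DERIV g z :> l" "g t - g 0 = (t - 0) * l"
      using MVT[OF t(1)] by blast
    have "l = - f z"
      using DERIV_unique[OF z(3) deriv[of z]] z t by simp
    then have "g t = t * - f z" using z(4) assms(2) by simp
    moreover have "M \<le> - f z" using f_le[of z] z t by simp
    ultimately show ?thesis
      using t mult_right_mono[of M "- f z" t] by (simp add: algebra_simps)
  qed
  moreover have "0 < min \<delta> 1" using \<open>\<delta> > 0\<close> by simp
  ultimately show ?thesis by blast
qed

lemma prob_dists_nonneg: "p \<in> prob_dists A \<Longrightarrow> a \<in> A \<Longrightarrow> 0 \<le> p a"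
  by (simp add: prob_dists_def)

subsection \<open>Distributions, pairings and the objective\<close>

lemma prob_dists_subset_sum_le:
  assumes "p \<in> prob_dists A" and "finite F" "F \<subseteq> A"
  shows "sum p F \<le> 1"
proof -
  have "(p has_sum 1) A" using assms(1) by (simp add: prob_dists_def)
  then show ?thesis
    by (rule finite_sum_le_has_sum[OF _ assms(2,3)]) (use prob_dists_nonneg[OF assms(1)] in auto)
qed

lemma prob_dists_le_one: "p \<in> prob_dists A \<Longrightarrow> a \<in> A \<Longrightarrow> p a \<le> 1"
  using prob_dists_subset_sum_le[of p A "{a}"] by simp

lemma prob_dists_pair_le:
  assumes "p \<in> prob_dists A" and "a \<in> A" "b \<in> A" "a \<noteq> b"
  shows "p a + p b \<le> 1"
  using prob_dists_subset_sum_le[of p A "{a, b}"] assms by simp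

lemma prob_dists_ex_pos:
  assumes "p \<in> prob_dists A"
  shows "\<exists>b\<in>A. 0 < p b"
proof (rule ccontr)
  assume "\<not> (\<exists>b\<in>A. 0 < p b)"
  then have "\<And>b. b \<in> A \<Longrightarrow> p b = 0"
    using prob_dists_nonneg[OF assms] by force
  then have "(p has_sum 0) A" by (rule has_sum_0)
  moreover have "(p has_sum 1) A" using assms by (simp add: prob_dists_def)
  ultimately have "(0::real) = 1" by (rule has_sum_unique)
  then show False by simp
qed

lemma prob_dists_transfer:
  assumes "p \<in> prob_dists A" and "a \<in> A" "b \<in> A" "a \<noteq> b"
    and "0 \<le> p a + t" "0 \<le> p b - t"
  shows "p(a := p a + t, b := p b - t) \<in> prob_dists A"
proof -
  let ?q = "p(a := p a + t, b := p b - t)"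
  have "(p has_sum 1) A" using assms(1) by (simp add: prob_dists_def)
  then have "(?q has_sum (1 + (\<Sum>x\<in>{a, b}. ?q x - p x))) A"
    by (rule has_sum_change_finite) (use assms(2,3) in auto)
  moreover have "(\<Sum>x\<in>{a, b}. ?q x - p x) = 0"
    using assms(4) by simp
  moreover have "\<forall>x\<in>A. 0 \<le> ?q x"
    using prob_dists_nonneg[OF assms(1)] assms(5,6) by simp
  ultimately show ?thesis by (simp add: prob_dists_def)
qed

lemma neg_part_summable:
  assumes "p \<in> prob_dists A" and "\<And>a. a \<in> A \<Longrightarrow> c \<le> X a"
  shows "(\<lambda>a. p a * max (- X a) 0) summable_on A"
proof -
  have "p summable_on A" using assms(1) by (auto simp: prob_dists_def has_sum_iff)
  then have "(\<lambda>a. p a * max (- c) 0) summable_on A" by (rule summable_on_cmult_left)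
  moreover have "p a * max (- X a) 0 \<le> p a * max (- c) 0" if "a \<in> A" for a
    using assms(2)[OF that] prob_dists_nonneg[OF assms(1) that] by (intro mult_left_mono) auto
  ultimately show ?thesis
    by (rule summable_on_comparison_test) (use prob_dists_nonneg[OF assms(1)] in auto)
qed

lemma pair_of_summable:
  assumes "p \<in> prob_dists A" and "\<And>a. a \<in> A \<Longrightarrow> c \<le> X a"
    and "(\<lambda>a. p a * max (X a) 0) summable_on A"
  shows "pair A p X = ereal ((\<Sum>\<^sub>\<infinity>a\<in>A. p a * max (X a) 0) - (\<Sum>\<^sub>\<infinity>a\<in>A. p a * max (- X a) 0))"
proof -
  have pos: "enn2ereal (\<Sum>\<^sub>\<infinity>a\<in>A. ennreal (p a * max (X a) 0)) = ereal (\<Sum>\<^sub>\<infinity>a\<in>A. p a * max (X a) 0)"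
    by (rule enn2ereal_infsum_of_summable[OF assms(3)]) (simp add: prob_dists_nonneg[OF assms(1)])
  have neg: "enn2ereal (\<Sum>\<^sub>\<infinity>a\<in>A. ennreal (p a * max (- X a) 0)) = ereal (\<Sum>\<^sub>\<infinity>a\<in>A. p a * max (- X a) 0)"
    by (rule enn2ereal_infsum_of_summable[OF neg_part_summable[OF assms(1,2)]])
       (auto intro!: mult_nonneg_nonneg prob_dists_nonneg[OF assms(1)])
  show ?thesis unfolding pair_def pos neg by simp
qed

lemma pair_of_not_summable:
  assumes "p \<in> prob_dists A" and "\<And>a. a \<in> A \<Longrightarrow> c \<le> X a"
    and "\<not> (\<lambda>a. p a * max (X a) 0) summable_on A"
  shows "pair A p X = \<infinity>"
proof -
  have pos: "(\<Sum>\<^sub>\<infinity>a\<in>A. ennreal (p a * max (X a) 0)) = \<infinity>"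
    by (rule ennreal_infsum_of_not_summable[OF assms(3)]) (simp add: prob_dists_nonneg[OF assms(1)])
  have neg: "enn2ereal (\<Sum>\<^sub>\<infinity>a\<in>A. ennreal (p a * max (- X a) 0)) = ereal (\<Sum>\<^sub>\<infinity>a\<in>A. p a * max (- X a) 0)"
    by (rule enn2ereal_infsum_of_summable[OF neg_part_summable[OF assms(1,2)]])
       (auto intro!: mult_nonneg_nonneg prob_dists_nonneg[OF assms(1)])
  show ?thesis unfolding pair_def pos neg by simp
qed

lemma gen_entropy_of_summable:
  assumes "(\<lambda>a. h a (p a)) summable_on A" and "\<And>a. a \<in> A \<Longrightarrow> 0 \<le> h a (p a)"
  shows "gen_entropy A h p = ereal (\<Sum>\<^sub>\<infinity>a\<in>A. h a (p a))"
  unfolding gen_entropy_def by (rule enn2ereal_infsum_of_summable[OF assms])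

lemma gen_entropy_of_not_summable:
  assumes "\<not> (\<lambda>a. h a (p a)) summable_on A" and "\<And>a. a \<in> A \<Longrightarrow> 0 \<le> h a (p a)"
  shows "gen_entropy A h p = \<infinity>"
  unfolding gen_entropy_def using ennreal_infsum_of_not_summable[OF assms] by simp

lemma vp_obj_PInfty:
  assumes "vp_defined A h n H \<theta> p" and "\<infinity> \<in> vp_terms A h n H \<theta> p"
  shows "vp_obj A h n H \<theta> p = \<infinity>"
proof -
  let ?t = "\<lambda>j. ereal (\<theta> j) * pair A p (H j)"
  have nonneg: "0 \<le> gen_entropy A h p" by (simp add: gen_entropy_def)
  have no_MInf: "- \<infinity> \<notin> vp_terms A h n H \<theta> p" using assms by (simp add: vp_defined_def)
  have no_PInf: "?t j \<noteq> \<infinity>" if "j \<in> {1..n}" for j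
  proof
    assume PInf: "?t j = \<infinity>"
    have "- \<infinity> \<in> vp_terms A h n H \<theta> p"
      unfolding vp_terms_def by (intro insertI2 image_eqI[where x = j]) (simp_all only: PInf that)
    with no_MInf show False by contradiction
  qed
  then have sum_ne: "(\<Sum>j\<in>{1..n}. ?t j) \<noteq> \<infinity>"
    unfolding sum_Pinfty by blast
  from assms(2) consider "\<infinity> = gen_entropy A h p" | j where "j \<in> {1..n}" "\<infinity> = - ?t j"
    unfolding vp_terms_def by blast
  then show ?thesis
  proof cases
    case 1
    then show ?thesis
      unfolding vp_obj_def 1[symmetric] using sum_ne by (cases "\<Sum>j\<in>{1..n}. ?t j") simp_all
  next
    case (2 j)
    then have "?t j = - \<infinity>" by (metis ereal_uminus_uminus)
    then have sum_MInf: "(\<Sum>j\<in>{1..n}. ?t j) = - \<infinity>"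
      using sum_ereal_MInfty[of "{1..n}" ?t j] no_PInf 2 by blast
    show ?thesis
      unfolding vp_obj_def sum_MInf using nonneg by (cases "gen_entropy A h p") simp_all
  qed
qed

lemma vp_obj_MInfty:
  assumes "vp_defined A h n H \<theta> p" and "- \<infinity> \<in> vp_terms A h n H \<theta> p"
  shows "vp_obj A h n H \<theta> p = - \<infinity>"
proof -
  let ?t = "\<lambda>j. ereal (\<theta> j) * pair A p (H j)"
  have nonneg: "0 \<le> gen_entropy A h p" by (simp add: gen_entropy_def)
  then have "- \<infinity> \<noteq> gen_entropy A h p" by (cases "gen_entropy A h p") auto
  with assms(2) obtain j where j: "j \<in> {1..n}" "- \<infinity> = - ?t j"
    unfolding vp_terms_def by blast
  then have "?t j = \<infinity>" by (metis ereal_uminus_eq_iff)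
  then have sum_PInf: "(\<Sum>j\<in>{1..n}. ?t j) = \<infinity>"
    using j(1) by (metis finite_atLeastAtMost sum_Pinfty)
  have "\<infinity> \<notin> vp_terms A h n H \<theta> p" using assms by (simp add: vp_defined_def)
  then have "gen_entropy A h p \<noteq> \<infinity>" unfolding vp_terms_def by auto
  then obtain r where "gen_entropy A h p = ereal r"
    using nonneg by (cases "gen_entropy A h p") auto
  then show ?thesis
    unfolding vp_obj_def sum_PInf by simp
qed

subsection \<open>The setting of the theorem\<close>

text \<open>The hypotheses of the theorem that the argument uses.\<close>

locale entropy_vp =
  fixes A :: "'a set" and h f :: "'a \<Rightarrow> real \<Rightarrow> real"
    and n :: nat and H :: "nat \<Rightarrow> 'a \<Rightarrow> real" and \<theta> :: "nat \<Rightarrow> real"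
  assumes h_cont: "\<And>a. a \<in> A \<Longrightarrow> continuous_on {0..1} (h a)"
    and h_strict_concave: "\<And>a. a \<in> A \<Longrightarrow> strictly_concave_on {0..1} (h a)"
    and h_0: "\<And>a. a \<in> A \<Longrightarrow> h a 0 = 0"
    and h_1: "\<And>a. a \<in> A \<Longrightarrow> h a 1 = 0"
    and h_deriv: "\<And>a u. a \<in> A \<Longrightarrow> 0 < u \<Longrightarrow> u < 1 \<Longrightarrow>
                    (h a has_real_derivative - f a u) (at u)"
    and f_at_0: "\<And>a. a \<in> A \<Longrightarrow> filterlim (f a) at_bot (at_right 0)"
    and H_bdd_below: "\<And>j. j \<in> {1..n} \<Longrightarrow> \<exists>c. \<forall>a\<in>A. c \<le> H j a"
begin

definition energy :: "'a \<Rightarrow> real" where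
  "energy a = (\<Sum>j\<in>{1..n}. \<theta> j * H j a)"

definition obj_term :: "'a \<Rightarrow> real \<Rightarrow> real" where
  "obj_term a u = h a u - u * energy a"

definition total :: "('a \<Rightarrow> real) \<Rightarrow> real" where
  "total p = (\<Sum>\<^sub>\<infinity>a\<in>A. obj_term a (p a))"

text \<open>A distribution is regular when all summands of its objective are finite
  (pairings with theta_j = 0 do not matter); then the objective is the real number total p.\<close>

definition regular :: "('a \<Rightarrow> real) \<Rightarrow> bool" where
  "regular p \<longleftrightarrow> (\<lambda>a. h a (p a)) summable_on A \<and>
     (\<forall>j\<in>{1..n}. \<theta> j \<noteq> 0 \<longrightarrow> (\<lambda>a. p a * max (H j a) 0) summable_on A)"

definition gibbs :: "real \<Rightarrow> ('a \<Rightarrow> real) \<Rightarrow> bool" where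
  "gibbs \<alpha> p \<longleftrightarrow> (\<forall>a\<in>A. 0 < p a \<and> f a (p a) = - \<alpha> - energy a)"

lemma h_nonneg:
  assumes "p \<in> prob_dists A" and "a \<in> A"
  shows "0 \<le> h a (p a)"
  by (rule concave_nonneg_between_zeros[OF h_strict_concave h_0 h_1])
     (use assms prob_dists_nonneg prob_dists_le_one in auto)

lemma H_neg_part_summable:
  assumes "p \<in> prob_dists A" and "j \<in> {1..n}"
  shows "(\<lambda>a. p a * max (- H j a) 0) summable_on A"
proof -
  obtain c where "\<forall>a\<in>A. c \<le> H j a" using H_bdd_below[OF assms(2)] by blast
  then show ?thesis using neg_part_summable[OF assms(1)] by blast
qed

lemma obj_term_split:
  "obj_term a (p a) =
     h a (p a) - (\<Sum>j\<in>{1..n}. \<theta> j * (p a * max (H j a) 0 - p a * max (- H j a) 0))"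
proof -
  have "p a * max (H j a) 0 - p a * max (- H j a) 0 = p a * H j a" for j
    by (simp add: max_def algebra_simps)
  then show ?thesis
    unfolding obj_term_def energy_def by (simp add: sum_distrib_left algebra_simps)
qed

lemma weighted_pair:
  assumes p: "p \<in> prob_dists A" and "regular p" and j: "j \<in> {1..n}"
  defines "D \<equiv> \<theta> j * ((\<Sum>\<^sub>\<infinity>a\<in>A. p a * max (H j a) 0) - (\<Sum>\<^sub>\<infinity>a\<in>A. p a * max (- H j a) 0))"
  shows "ereal (\<theta> j) * pair A p (H j) = ereal D"
    and "((\<lambda>a. \<theta> j * (p a * max (H j a) 0 - p a * max (- H j a) 0)) has_sum D) A"
proof -
  have "ereal (\<theta> j) * pair A p (H j) = ereal D \<and>
        ((\<lambda>a. \<theta> j * (p a * max (H j a) 0 - p a * max (- H j a) 0)) has_sum D) A"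
  proof (cases "\<theta> j = 0")
    case True
    then show ?thesis by (simp add: D_def zero_ereal_def[symmetric])
  next
    case False
    then have pos: "(\<lambda>a. p a * max (H j a) 0) summable_on A"
      using \<open>regular p\<close> j by (simp add: regular_def)
    obtain c where "\<forall>a\<in>A. c \<le> H j a" using H_bdd_below[OF j] by blast
    then have "pair A p (H j) = ereal ((\<Sum>\<^sub>\<infinity>a\<in>A. p a * max (H j a) 0) - (\<Sum>\<^sub>\<infinity>a\<in>A. p a * max (- H j a) 0))"
      using pair_of_summable[OF p _ pos] by blast
    moreover have "((\<lambda>a. \<theta> j * (p a * max (H j a) 0 - p a * max (- H j a) 0)) has_sum D) A"
      unfolding D_def
      using pos H_neg_part_summable[OF p j] by (intro has_sum_cmult_right has_sum_diff) auto
    ultimately show ?thesis by (simp add: D_def)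
  qed
  then show "ereal (\<theta> j) * pair A p (H j) = ereal D"
    and "((\<lambda>a. \<theta> j * (p a * max (H j a) 0 - p a * max (- H j a) 0)) has_sum D) A"
    by auto
qed

lemma regular_objective:
  assumes p: "p \<in> prob_dists A" and reg: "regular p"
  shows "vp_defined A h n H \<theta> p"
    and "((\<lambda>a. obj_term a (p a)) has_sum total p) A"
    and "vp_obj A h n H \<theta> p = ereal (total p)"
proof -
  define D where "D j = \<theta> j * ((\<Sum>\<^sub>\<infinity>a\<in>A. p a * max (H j a) 0) - (\<Sum>\<^sub>\<infinity>a\<in>A. p a * max (- H j a) 0))" for j
  define E where "E = (\<Sum>\<^sub>\<infinity>a\<in>A. h a (p a))"
  have h_summable: "(\<lambda>a. h a (p a)) summable_on A" using reg by (simp add: regular_def)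
  have entropy: "gen_entropy A h p = ereal E"
    unfolding E_def using h_summable h_nonneg[OF p] by (rule gen_entropy_of_summable)
  have terms: "\<And>j. j \<in> {1..n} \<Longrightarrow> ereal (\<theta> j) * pair A p (H j) = ereal (D j)"
    using weighted_pair(1)[OF p reg] by (simp add: D_def)
  have "vp_terms A h n H \<theta> p = insert (ereal E) ((\<lambda>j. - ereal (D j)) ` {1..n})"
    unfolding vp_terms_def entropy using terms by (auto intro!: image_cong)
  then show "vp_defined A h n H \<theta> p" by (auto simp: vp_defined_def)
  have "((\<lambda>a. h a (p a) - (\<Sum>j\<in>{1..n}. \<theta> j * (p a * max (H j a) 0 - p a * max (- H j a) 0)))
          has_sum (E - (\<Sum>j\<in>{1..n}. D j))) A"
    using h_summable weighted_pair(2)[OF p reg] unfolding E_def D_def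
    by (intro has_sum_diff has_sum_finite_sum) auto
  then have sum: "((\<lambda>a. obj_term a (p a)) has_sum (E - (\<Sum>j\<in>{1..n}. D j))) A"
    by (simp only: obj_term_split)
  then show "((\<lambda>a. obj_term a (p a)) has_sum total p) A"
    unfolding total_def by (simp add: has_sum_iff)
  have "vp_obj A h n H \<theta> p = ereal (E - (\<Sum>j\<in>{1..n}. D j))"
    unfolding vp_obj_def entropy using terms by (simp add: sum_ereal)
  also have "E - (\<Sum>j\<in>{1..n}. D j) = total p"
    using sum unfolding total_def by (simp add: has_sum_iff)
  finally show "vp_obj A h n H \<theta> p = ereal (total p)" .
qed

lemma objective_MInfty_if_unbounded:
  assumes p: "p \<in> prob_dists A" and "vp_defined A h n H \<theta> p"
    and j: "j \<in> {1..n}" "\<theta> j > 0"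
    and "\<not> (\<lambda>a. p a * max (H j a) 0) summable_on A"
  shows "vp_obj A h n H \<theta> p = - \<infinity>"
proof (rule vp_obj_MInfty[OF assms(2)])
  obtain c where "\<forall>a\<in>A. c \<le> H j a" using H_bdd_below[OF j(1)] by blast
  then have "pair A p (H j) = \<infinity>" using pair_of_not_summable[OF p _ assms(5)] by blast
  then have "- \<infinity> = - (ereal (\<theta> j) * pair A p (H j))" using j(2) by simp
  then show "- \<infinity> \<in> vp_terms A h n H \<theta> p"
    unfolding vp_terms_def using j(1) by blast
qed

lemma regular_if_finite:
  assumes p: "p \<in> prob_dists A" and "vp_defined A h n H \<theta> p"
    and "\<bar>vp_obj A h n H \<theta> p\<bar> \<noteq> \<infinity>"
  shows "regular p"
proof (rule ccontr)
  assume "\<not> regular p"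
  then consider "\<not> (\<lambda>a. h a (p a)) summable_on A"
    | j where "j \<in> {1..n}" "\<theta> j \<noteq> 0" "\<not> (\<lambda>a. p a * max (H j a) 0) summable_on A"
    unfolding regular_def by blast
  then have "\<infinity> \<in> vp_terms A h n H \<theta> p \<or> - \<infinity> \<in> vp_terms A h n H \<theta> p"
  proof cases
    case 1
    then have "gen_entropy A h p = \<infinity>"
      using gen_entropy_of_not_summable h_nonneg[OF p] by blast
    then show ?thesis by (simp add: vp_terms_def)
  next
    case (2 j)
    obtain c where "\<forall>a\<in>A. c \<le> H j a" using H_bdd_below[OF 2(1)] by blast
    then have "pair A p (H j) = \<infinity>" using pair_of_not_summable[OF p _ 2(3)] by blast
    then have "- (ereal (\<theta> j) * pair A p (H j)) \<in> {\<infinity>, - \<infinity>}"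
      using 2(2) by (cases "\<theta> j > 0") auto
    moreover have "- (ereal (\<theta> j) * pair A p (H j)) \<in> vp_terms A h n H \<theta> p"
      unfolding vp_terms_def using 2(1) by blast
    ultimately show ?thesis by auto
  qed
  then show False
    using vp_obj_PInfty[OF assms(2)] vp_obj_MInfty[OF assms(2)] assms(3) by auto
qed

subsection \<open>Sufficiency of the Gibbs condition\<close>

text \<open>Pointwise form of sufficiency: by the tangent inequality at the Gibbs weight,
  obj_term a u - alpha u is maximised at u = ps a over [0,1].  (If ps a = 1 then A is a
  singleton and every distribution equals ps.)\<close>

lemma gibbs_pointwise:
  assumes ps: "ps \<in> prob_dists A" and p: "p \<in> prob_dists A" and gibbs: "gibbs \<alpha> ps"
    and a: "a \<in> A"
  shows "obj_term a (p a) - \<alpha> * p a \<le> obj_term a (ps a) - \<alpha> * ps a"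
proof (cases "ps a < 1")
  case True
  have slope: "0 < ps a" "- f a (ps a) = \<alpha> + energy a"
    using gibbs a by (auto simp: gibbs_def)
  then have "ps a \<in> interior {0..1}" using True by simp
  then have "h a (p a) \<le> h a (ps a) + - f a (ps a) * (p a - ps a)"
    by (rule strictly_concave_on_tangent[OF h_strict_concave[OF a] _ _ h_deriv[OF a slope(1) True]])
       (use prob_dists_nonneg[OF p a] prob_dists_le_one[OF p a] in auto)
  then show ?thesis unfolding obj_term_def slope(2) by (simp add: algebra_simps)
next
  case False
  then have ps_a: "ps a = 1" using prob_dists_le_one[OF ps a] by simp
  have "A = {a}"
  proof -
    have "b = a" if "b \<in> A" for b
    proof (rule ccontr)
      assume "b \<noteq> a"
      then have "ps a + ps b \<le> 1" using prob_dists_pair_le[OF ps a that] by simp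
      moreover have "0 < ps b" using gibbs that by (simp add: gibbs_def)
      ultimately show False using ps_a by simp
    qed
    then show ?thesis using a by blast
  qed
  moreover have "(p has_sum 1) A" using p by (simp add: prob_dists_def)
  ultimately have "p a = 1" by (simp add: has_sum_iff)
  then show ?thesis using ps_a by simp
qed

text \<open>The pointwise inequality rearranged so that all nonnegative parts of a competitor's
  objective are dominated by summable quantities.\<close>

lemma competitor_dominated:
  assumes ps: "ps \<in> prob_dists A" "gibbs \<alpha> ps" and p: "p \<in> prob_dists A" and a: "a \<in> A"
  shows "h a (p a) + (\<Sum>j\<in>{1..n}. max (- \<theta> j) 0 * (p a * max (H j a) 0))
      \<le> obj_term a (ps a) - \<alpha> * ps a + \<alpha> * p a
        + (\<Sum>j\<in>{1..n}. max (\<theta> j) 0 * (p a * max (H j a) 0))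
        - (\<Sum>j\<in>{1..n}. \<theta> j * (p a * max (- H j a) 0))"
proof -
  define P where "P j = p a * max (H j a) 0" for j
  define N where "N j = p a * max (- H j a) 0" for j
  have "\<theta> j * (P j - N j) = max (\<theta> j) 0 * P j - max (- \<theta> j) 0 * P j - \<theta> j * N j" for j
    by (cases "\<theta> j \<ge> 0") (auto simp: max_def algebra_simps)
  then have "(\<Sum>j\<in>{1..n}. \<theta> j * (P j - N j)) = (\<Sum>j\<in>{1..n}. max (\<theta> j) 0 * P j)
      - (\<Sum>j\<in>{1..n}. max (- \<theta> j) 0 * P j) - (\<Sum>j\<in>{1..n}. \<theta> j * N j)"
    by (simp add: sum_subtractf)
  moreover have "obj_term a (p a) - \<alpha> * p a \<le> obj_term a (ps a) - \<alpha> * ps a"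
    by (rule gibbs_pointwise[OF ps(1) p ps(2) a])
  ultimately show ?thesis
    unfolding obj_term_split[of a p] P_def N_def by simp
qed

lemma competitor_regular:
  assumes ps: "ps \<in> prob_dists A" "regular ps" "gibbs \<alpha> ps" and p: "p \<in> prob_dists A"
    and pos_parts: "\<And>j. j \<in> {1..n} \<Longrightarrow> \<theta> j > 0 \<Longrightarrow> (\<lambda>a. p a * max (H j a) 0) summable_on A"
  shows "regular p"
proof -
  define P where "P j a = p a * max (H j a) 0" for j a
  define U where "U a = obj_term a (ps a) - \<alpha> * ps a + \<alpha> * p a
      + (\<Sum>j\<in>{1..n}. max (\<theta> j) 0 * P j a) - (\<Sum>j\<in>{1..n}. \<theta> j * (p a * max (- H j a) 0))" for a
  have bound: "h a (p a) + (\<Sum>j\<in>{1..n}. max (- \<theta> j) 0 * P j a) \<le> U a" if "a \<in> A" for a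
    unfolding U_def P_def by (rule competitor_dominated[OF ps(1,3) p that])
  have "U summable_on A"
  proof -
    have "(\<lambda>a. obj_term a (ps a)) summable_on A"
      using regular_objective(2)[OF ps(1,2)] by (auto simp: summable_on_def)
    moreover have "(\<lambda>a. \<alpha> * q a) summable_on A" if "q \<in> prob_dists A" for q
      using that by (intro summable_on_cmult_right) (auto simp: prob_dists_def summable_on_def)
    moreover have "(\<lambda>a. \<Sum>j\<in>{1..n}. max (\<theta> j) 0 * P j a) summable_on A"
      unfolding P_def using pos_parts
      by (intro summable_on_finite_sum) (auto intro: summable_on_cmult_right simp: max_def)
    moreover have "(\<lambda>a. \<Sum>j\<in>{1..n}. \<theta> j * (p a * max (- H j a) 0)) summable_on A"
      using H_neg_part_summable[OF p]
      by (intro summable_on_finite_sum summable_on_cmult_right) auto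
    ultimately show ?thesis
      unfolding U_def using ps(1) p by (intro summable_on_diff summable_on_add) auto
  qed
  moreover have "0 \<le> max (- \<theta> j) 0 * P j a" if "a \<in> A" for j a
    using prob_dists_nonneg[OF p that] by (simp add: P_def)
  ultimately have h_summable: "(\<lambda>a. h a (p a)) summable_on A"
    and neg_weight: "\<And>j. j \<in> {1..n} \<Longrightarrow> (\<lambda>a. max (- \<theta> j) 0 * P j a) summable_on A"
    using summable_on_nonneg_sum_bound[where g\<^sub>0 = "\<lambda>a. h a (p a)"
        and g = "\<lambda>j a. max (- \<theta> j) 0 * P j a", OF finite_atLeastAtMost _ bound]
      h_nonneg[OF p] by blast+
  have "(\<lambda>a. p a * max (H j a) 0) summable_on A" if j: "j \<in> {1..n}" "\<theta> j \<noteq> 0" for j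
  proof (cases "\<theta> j > 0")
    case True
    then show ?thesis using pos_parts j by blast
  next
    case False
    then have "(\<lambda>a. (- \<theta> j) * P j a) summable_on A" "- \<theta> j \<noteq> 0"
      using neg_weight[OF j(1)] j(2) by (simp_all add: max_def)
    then show ?thesis
      unfolding P_def using summable_on_cmult_right'[where c = "- \<theta> j"] by blast
  qed
  with h_summable show ?thesis by (simp add: regular_def)
qed

lemma gibbs_imp_vp:
  assumes ps: "ps \<in> prob_dists A" and defined: "vp_defined A h n H \<theta> ps"
    and finite: "\<bar>vp_obj A h n H \<theta> ps\<bar> \<noteq> \<infinity>" and gibbs: "gibbs \<alpha> ps"
  shows "variational_principle A h n H \<theta> ps"
proof -
  have reg: "regular ps" by (rule regular_if_finite[OF ps defined finite])
  have "vp_obj A h n H \<theta> p \<le> vp_obj A h n H \<theta> ps"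
    if p: "p \<in> prob_dists A" and "vp_defined A h n H \<theta> p" for p
  proof (cases "\<exists>j\<in>{1..n}. \<theta> j > 0 \<and> \<not> (\<lambda>a. p a * max (H j a) 0) summable_on A")
    case True
    then show ?thesis using objective_MInfty_if_unbounded[OF p \<open>vp_defined A h n H \<theta> p\<close>] by force
  next
    case False
    then have reg_p: "regular p" by (intro competitor_regular[OF ps reg gibbs p]) auto
    have with_mass: "((\<lambda>a. obj_term a (q a) - \<alpha> * q a) has_sum total q - \<alpha> * 1) A"
      if "q \<in> prob_dists A" "regular q" for q
      using regular_objective(2)[OF that] that(1)
      by (intro has_sum_diff has_sum_cmult_right) (auto simp: prob_dists_def)
    have "total p - \<alpha> * 1 \<le> total ps - \<alpha> * 1"
      by (rule has_sum_mono[OF with_mass[OF p reg_p] with_mass[OF ps reg]])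
         (rule gibbs_pointwise[OF ps p gibbs])
    then show ?thesis
      using regular_objective(3)[OF p reg_p] regular_objective(3)[OF ps reg] by simp
  qed
  moreover have "vp_obj A h n H \<theta> ps < \<infinity>" using finite by auto
  ultimately show ?thesis
    unfolding variational_principle_def using ps defined by blast
qed

subsection \<open>Necessity of the Gibbs condition\<close>

lemma regular_change_finite:
  assumes "regular p" and "finite F" "F \<subseteq> A" and "\<And>x. x \<in> A - F \<Longrightarrow> q x = p x"
  shows "regular q"
  using assms(1) summable_on_change_finite[OF _ assms(2,3)] assms(4)
  unfolding regular_def by (metis (no_types, lifting))

lemma vp_transfer_le:
  assumes vp: "variational_principle A h n H \<theta> ps"
    and finite: "\<bar>vp_obj A h n H \<theta> ps\<bar> \<noteq> \<infinity>"
    and ab: "a \<in> A" "b \<in> A" "a \<noteq> b" and t: "0 \<le> ps a + t" "0 \<le> ps b - t"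
  shows "obj_term a (ps a + t) + obj_term b (ps b - t) \<le> obj_term a (ps a) + obj_term b (ps b)"
proof -
  have ps: "ps \<in> prob_dists A" and defined: "vp_defined A h n H \<theta> ps"
    and opt: "\<And>p. p \<in> prob_dists A \<Longrightarrow> vp_defined A h n H \<theta> p \<Longrightarrow>
                  vp_obj A h n H \<theta> p \<le> vp_obj A h n H \<theta> ps"
    using vp by (auto simp: variational_principle_def)
  have reg: "regular ps" by (rule regular_if_finite[OF ps defined finite])
  define q where "q = ps(a := ps a + t, b := ps b - t)"
  have q: "q \<in> prob_dists A" unfolding q_def by (rule prob_dists_transfer[OF ps ab t])
  have off_ab: "\<And>x. x \<in> A - {a, b} \<Longrightarrow> q x = ps x" by (simp add: q_def)
  have reg_q: "regular q"
    by (rule regular_change_finite[OF reg, where F = "{a, b}"]) (use ab off_ab in auto)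
  have "((\<lambda>x. obj_term x (q x)) has_sum
          (total ps + (\<Sum>x\<in>{a, b}. obj_term x (q x) - obj_term x (ps x)))) A"
    by (rule has_sum_change_finite[OF regular_objective(2)[OF ps reg], where F = "{a, b}"])
       (use ab off_ab in auto)
  then have "total q = total ps + (\<Sum>x\<in>{a, b}. obj_term x (q x) - obj_term x (ps x))"
    using regular_objective(2)[OF q reg_q] has_sum_unique by blast
  moreover have "total q \<le> total ps"
    using opt[OF q regular_objective(1)[OF q reg_q]]
      regular_objective(3)[OF q reg_q] regular_objective(3)[OF ps reg] by simp
  ultimately show ?thesis using ab(3) by (simp add: q_def)
qed

text \<open>Every weight of a maximiser is positive: moving a small mass t to a point of weight
  zero gains at least M t (infinite slope of h at 0) but loses only O(t) elsewhere.\<close>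

lemma vp_pos:
  assumes vp: "variational_principle A h n H \<theta> ps"
    and finite: "\<bar>vp_obj A h n H \<theta> ps\<bar> \<noteq> \<infinity>" and a: "a \<in> A"
  shows "0 < ps a"
proof (rule ccontr)
  assume "\<not> 0 < ps a"
  have ps: "ps \<in> prob_dists A" using vp by (simp add: variational_principle_def)
  then have ps_a: "ps a = 0" using prob_dists_nonneg[OF ps a] \<open>\<not> 0 < ps a\<close> by simp
  obtain b where b: "b \<in> A" "0 < ps b" using prob_dists_ex_pos[OF ps] by blast
  have ab: "a \<noteq> b" using ps_a b by auto
  define s where "s = ps b"
  have s: "0 < s" "s \<le> 1" using b prob_dists_le_one[OF ps b(1)] by (auto simp: s_def)
  define M where "M = h b s / s - energy b + energy a + 1"
  obtain \<delta> where "\<delta> > 0" and steep: "\<And>t. 0 < t \<Longrightarrow> t < \<delta> \<Longrightarrow> M * t \<le> h a t"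
    using infinite_slope_at_zero[OF h_cont[OF a] h_0[OF a] h_deriv[OF a] f_at_0[OF a], of M]
    by blast
  define t where "t = min (\<delta> / 2) (s / 2)"
  have t: "0 < t" "t < \<delta>" "t < s" using \<open>\<delta> > 0\<close> s by (auto simp: t_def)
  have transfer: "obj_term a t + obj_term b (s - t) \<le> obj_term a 0 + obj_term b s"
    using vp_transfer_le[OF vp finite a b(1) ab, of t] ps_a t by (simp add: s_def)
  have "(s - t) / s * h b s \<le> h b ((s - t) / s * s)"
    by (rule concave_chord_from_zero[OF h_strict_concave[OF b(1)] h_0[OF b(1)]]) (use s t in auto)
  moreover have "(s - t) / s * h b s = h b s - t * (h b s / s)" and "(s - t) / s * s = s - t"
    using s by (simp_all add: field_simps)
  ultimately have chord: "h b s - t * (h b s / s) \<le> h b (s - t)" by simp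
  have "M * t = t * (h b s / s) - t * energy b + t * energy a + t"
    by (simp add: M_def algebra_simps)
  then show False
    using transfer steep[OF t(1,2)] chord t(1) h_0[OF a]
    by (simp add: obj_term_def algebra_simps)
qed

lemma obj_term_deriv:
  assumes "a \<in> A" and "0 < x" "x < 1"
  shows "(obj_term a has_real_derivative (- f a x - energy a)) (at x)"
proof -
  have "((\<lambda>u. h a u - u * energy a) has_real_derivative (- f a x - 1 * energy a)) (at x)"
    by (rule DERIV_diff[OF h_deriv[OF assms] DERIV_cmult_right[OF DERIV_ident]])
  then show ?thesis by (simp add: obj_term_def[abs_def])
qed

text \<open>First-order condition: since all weights are positive, the mass transfer
  t between a and b is a two-sided perturbation, and Fermat's rule at t = 0 equates
  the slopes f a (ps a) + energy a and f b (ps b) + energy b.\<close>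

lemma vp_equal_slopes:
  assumes vp: "variational_principle A h n H \<theta> ps"
    and finite: "\<bar>vp_obj A h n H \<theta> ps\<bar> \<noteq> \<infinity>"
    and ab: "a \<in> A" "b \<in> A" "a \<noteq> b"
  shows "f a (ps a) + energy a = f b (ps b) + energy b"
proof -
  have ps: "ps \<in> prob_dists A" using vp by (simp add: variational_principle_def)
  have pos: "0 < ps a" "0 < ps b" using vp_pos[OF vp finite] ab by auto
  moreover have "ps a + ps b \<le> 1" by (rule prob_dists_pair_le[OF ps ab])
  ultimately have lt1: "ps a < 1" "ps b < 1" by auto
  define \<psi> where "\<psi> t = obj_term a (ps a + t) + obj_term b (ps b - t)" for t
  have "(\<psi> has_real_derivative (- f a (ps a) - energy a) * 1 + (- f b (ps b) - energy b) * (- 1))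
          (at 0)"
    unfolding \<psi>_def
    by (intro DERIV_add DERIV_chain2[of "obj_term a"] DERIV_chain2[of "obj_term b"]
          derivative_eq_intros)
       (use obj_term_deriv[OF ab(1) pos(1) lt1(1)] obj_term_deriv[OF ab(2) pos(2) lt1(2)] in auto)
  moreover have "\<forall>y. \<bar>0 - y\<bar> < min (ps a) (ps b) \<longrightarrow> \<psi> y \<le> \<psi> 0"
    unfolding \<psi>_def using vp_transfer_le[OF vp finite ab] by auto
  ultimately have "(- f a (ps a) - energy a) * 1 + (- f b (ps b) - energy b) * (- 1) = 0"
    using DERIV_local_max pos by (metis min_less_iff_conj)
  then show ?thesis by simp
qed

lemma vp_imp_gibbs:
  assumes vp: "variational_principle A h n H \<theta> ps"
    and finite: "\<bar>vp_obj A h n H \<theta> ps\<bar> \<noteq> \<infinity>"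
  shows "\<exists>\<alpha>. gibbs \<alpha> ps"
proof -
  have ps: "ps \<in> prob_dists A" using vp by (simp add: variational_principle_def)
  obtain a\<^sub>0 where a\<^sub>0: "a\<^sub>0 \<in> A" using prob_dists_ex_pos[OF ps] by blast
  have "f a (ps a) = - (- f a\<^sub>0 (ps a\<^sub>0) - energy a\<^sub>0) - energy a" if "a \<in> A" for a
    using vp_equal_slopes[OF vp finite that a\<^sub>0] by (cases "a = a\<^sub>0") auto
  then have "gibbs (- f a\<^sub>0 (ps a\<^sub>0) - energy a\<^sub>0) ps"
    using vp_pos[OF vp finite] by (simp add: gibbs_def)
  then show ?thesis ..
qed

end

theorem theorem1:
  fixes A :: "'a set" and h f :: "'a \<Rightarrow> real \<Rightarrow> real"
    and n :: nat and H :: "nat \<Rightarrow> 'a \<Rightarrow> real" and \<theta> :: "nat \<Rightarrow> real"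
    and ps :: "'a \<Rightarrow> real"
  assumes A_countable: "countable A"
    and h_cont: "\<And>a. a \<in> A \<Longrightarrow> continuous_on {0..1} (h a)"
    and h_strict_concave: "\<And>a. a \<in> A \<Longrightarrow> strictly_concave_on {0..1} (h a)"
    and h_0: "\<And>a. a \<in> A \<Longrightarrow> h a 0 = 0"
    and h_1: "\<And>a. a \<in> A \<Longrightarrow> h a 1 = 0"
    and h_deriv: "\<And>a u. a \<in> A \<Longrightarrow> 0 < u \<Longrightarrow> u < 1 \<Longrightarrow>
                    (h a has_real_derivative - f a u) (at u)"
    and f_cont: "\<And>a. a \<in> A \<Longrightarrow> continuous_on {0<..1} (f a)"
    and f_at_0: "\<And>a. a \<in> A \<Longrightarrow> filterlim (f a) at_bot (at_right 0)"
    and H_bdd_below: "\<And>j. j \<in> {1..n} \<Longrightarrow> \<exists>c. \<forall>a\<in>A. c \<le> H j a"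
    and ps_dist: "ps \<in> prob_dists A"
    and ps_finite: "vp_defined A h n H \<theta> ps" "\<bar>vp_obj A h n H \<theta> ps\<bar> \<noteq> \<infinity>"
  shows "variational_principle A h n H \<theta> ps \<longleftrightarrow>
         (\<exists>\<alpha>::real. \<forall>a\<in>A. 0 < ps a \<and>
             f a (ps a) = - \<alpha> - (\<Sum>j\<in>{1..n}. \<theta> j * H j a))"
proof -
  interpret entropy_vp A h f n H \<theta>
    using h_cont h_strict_concave h_0 h_1 h_deriv f_at_0 H_bdd_below by unfold_locales
  have "(\<exists>\<alpha>::real. \<forall>a\<in>A. 0 < ps a \<and> f a (ps a) = - \<alpha> - (\<Sum>j\<in>{1..n}. \<theta> j * H j a))
        \<longleftrightarrow> (\<exists>\<alpha>. gibbs \<alpha> ps)"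
    by (simp add: gibbs_def energy_def)
  then show ?thesis
    using vp_imp_gibbs[OF _ ps_finite(2)] gibbs_imp_vp[OF ps_dist ps_finite] by blast
qed

end
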